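(* Let $b_1,b_2,b_3\in\mathbb{R}$ with $b_1b_2b_3\neq0$ and $b_2b_3<0$, and consider the system $$\dot x_1=b_1x_2,\qquad \dot x_2=b_2x_1x_3,\qquad \dot x_3=b_3x_1x_2 .$$ Then for every $m\in\mathbb{R}\setminus\{0\}$ the equilibrium state $e_1^m=(m,0,0)$ is nonlinear stable.
   Context: Nonlinear stable means stable in the sense of Lyapunov: for every neighbourhood $U$ of the equilibrium there is a neighbourhood $V$ such that every trajectory starting in $V$ remains in $U$ for all $t\ge0$. *)

theory Defs
  imports "HOL-Analysis.Analysis"
begin

text \<open>State space R^3 modelled as real \<times> real \<times> real (product topology = Euclidean).\<close>

definition sys_field :: "real \<Rightarrow> real \<Rightarrow> real \<Rightarrow> real \<times> real \<times> real \<Rightarrow> real \<times> real \<times> real" where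
  "sys_field b1 b2 b3 = (\<lambda>(x1, x2, x3). (b1 * x2, b2 * x1 * x3, b3 * x1 * x2))"

definition solves_on :: "('a::real_normed_vector \<Rightarrow> 'a) \<Rightarrow> (real \<Rightarrow> 'a) \<Rightarrow> real set \<Rightarrow> bool" where
  "solves_on f x I \<longleftrightarrow> (\<forall>t\<in>I. (x has_vector_derivative f (x t)) (at t within I))"

text \<open>Lyapunov (nonlinear) stability: for every neighbourhood U of e there is a neighbourhood V
  of e such that every trajectory starting in V stays in U for all t \<ge> 0 (for as long as it is
  defined; trajectories on [0,T) for every T cover all forward solutions).\<close>
definition nonlinear_stable :: "('a::real_normed_vector \<Rightarrow> 'a) \<Rightarrow> 'a \<Rightarrow> bool" where
  "nonlinear_stable f e \<longleftrightarrow>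
     (\<forall>U. open U \<and> e \<in> U \<longrightarrow>
        (\<exists>V. open V \<and> e \<in> V \<and>
           (\<forall>x T. solves_on f x {0..<T} \<and> x 0 \<in> V \<longrightarrow> (\<forall>t\<in>{0..<T}. x t \<in> U))))"

end

theory Submission
  imports Defs
begin

text \<open>The Casimir-type functions \<open>b\<^sub>3x\<^sub>2\<^sup>2 - b\<^sub>2x\<^sub>3\<^sup>2\<close> and \<open>b\<^sub>3x\<^sub>1\<^sup>2 - 2b\<^sub>1x\<^sub>3\<close>
  are first integrals of the system. Since \<open>b\<^sub>2b\<^sub>3 < 0\<close>, the combination
  \<open>b\<^sub>3(b\<^sub>3x\<^sub>2\<^sup>2 - b\<^sub>2x\<^sub>3\<^sup>2) + (b\<^sub>3x\<^sub>1\<^sup>2 - 2b\<^sub>1x\<^sub>3 - b\<^sub>3m\<^sup>2)\<^sup>2\<close> is a conserved quantity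
  that vanishes exactly at \<open>(\<plusminus>m, 0, 0)\<close>, so it has a strict local minimum at \<open>(m, 0, 0)\<close>.
  Stability then follows from the Lagrange--Dirichlet argument: a trajectory leaving a small
  sphere around the equilibrium would have to cross it, where the conserved quantity is bounded
  below by its positive minimum.\<close>

lemma solves_on_continuous_on:
  "solves_on f x S \<Longrightarrow> continuous_on S x"
  unfolding solves_on_def continuous_on_eq_continuous_within
  by (blast intro: has_vector_derivative_continuous)

lemma nonlinear_stable_if_conserved_strict_local_min:
  fixes f :: "'a::euclidean_space \<Rightarrow> 'a" and V :: "'a \<Rightarrow> real"
  assumes "r > 0" and "continuous_on UNIV V"
    and strict_min: "\<And>y. y \<in> cball e r \<Longrightarrow> y \<noteq> e \<Longrightarrow> V e < V y"
    and conserved: "\<And>x T t. solves_on f x {0..<T} \<Longrightarrow> t \<in> {0..<T} \<Longrightarrow> V (x t) = V (x 0)"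
  shows "nonlinear_stable f e"
  unfolding nonlinear_stable_def
proof (intro allI impI)
  fix U assume "open U \<and> e \<in> U"
  then obtain \<epsilon>0 where "\<epsilon>0 > 0" "cball e \<epsilon>0 \<subseteq> U"
    using open_contains_cball by blast
  define \<epsilon> where "\<epsilon> = min \<epsilon>0 r"
  have \<epsilon>: "\<epsilon> > 0" "\<epsilon> \<le> r" "cball e \<epsilon> \<subseteq> U"
    using \<open>\<epsilon>0 > 0\<close> \<open>r > 0\<close> \<open>cball e \<epsilon>0 \<subseteq> U\<close> by (auto simp: \<epsilon>_def)
  have "sphere e \<epsilon> \<noteq> {}"
    using \<epsilon>(1) by simp
  then obtain z where z: "z \<in> sphere e \<epsilon>" and z_min: "\<And>y. y \<in> sphere e \<epsilon> \<Longrightarrow> V z \<le> V y"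
    using continuous_attains_inf[OF compact_sphere _ continuous_on_subset[OF \<open>continuous_on UNIV V\<close>]]
    by blast
  have "V e < V z"
    using strict_min z \<epsilon> by auto
  moreover have "isCont V e"
    using \<open>continuous_on UNIV V\<close> by (simp add: continuous_on_eq_continuous_at)
  ultimately obtain \<delta> where "\<delta> > 0" and \<delta>: "\<And>y. dist y e < \<delta> \<Longrightarrow> V y < V z"
    unfolding continuous_at_eps_delta dist_real_def
    by (metis abs_diff_less_iff add.commute diff_add_cancel diff_gt_0_iff_gt)
  show "\<exists>W. open W \<and> e \<in> W \<and>
          (\<forall>x T. solves_on f x {0..<T} \<and> x 0 \<in> W \<longrightarrow> (\<forall>t\<in>{0..<T}. x t \<in> U))"
  proof (intro exI conjI allI impI ballI)
    show "open (ball e (min \<delta> \<epsilon>))" "e \<in> ball e (min \<delta> \<epsilon>)"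
      using \<open>\<delta> > 0\<close> \<epsilon>(1) by auto
    fix x T t
    assume "solves_on f x {0..<T} \<and> x 0 \<in> ball e (min \<delta> \<epsilon>)" and t: "t \<in> {0..<T}"
    then have sol: "solves_on f x {0..<T}" and x0: "dist e (x 0) < min \<delta> \<epsilon>"
      by auto
    show "x t \<in> U"
    proof (rule ccontr)
      assume "x t \<notin> U"
      then have "\<epsilon> \<le> dist e (x t)"
        using \<epsilon>(3) by (meson less_imp_le linorder_not_le mem_cball subsetD)
      moreover have "continuous_on {0..t} (\<lambda>s. dist e (x s))"
        using solves_on_continuous_on[OF sol] t
        by (intro continuous_intros) (auto elim: continuous_on_subset)
      ultimately obtain s where s: "0 \<le> s" "s \<le> t" "dist e (x s) = \<epsilon>"
        using IVT'[of "\<lambda>s. dist e (x s)" 0 \<epsilon> t] x0 t by auto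
      then have "V z \<le> V (x 0)"
        using z_min[of "x s"] conserved[OF sol, of s] t by auto
      moreover have "V (x 0) < V z"
        using \<delta> x0 by (simp add: dist_commute)
      ultimately show False by simp
    qed
  qed
qed

lemma has_vector_derivative_fst:
  "(f has_vector_derivative v) F \<Longrightarrow> ((\<lambda>t. fst (f t)) has_vector_derivative fst v) F"
  unfolding has_vector_derivative_def by (drule has_derivative_fst) simp

lemma has_vector_derivative_snd:
  "(f has_vector_derivative v) F \<Longrightarrow> ((\<lambda>t. snd (f t)) has_vector_derivative snd v) F"
  unfolding has_vector_derivative_def by (drule has_derivative_snd) simp

lemma sys_field_component_derivatives:
  assumes "solves_on (sys_field b1 b2 b3) x S" "t \<in> S"
  shows "((\<lambda>s. fst (x s)) has_real_derivative b1 * fst (snd (x t))) (at t within S)"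
    and "((\<lambda>s. fst (snd (x s))) has_real_derivative b2 * fst (x t) * snd (snd (x t))) (at t within S)"
    and "((\<lambda>s. snd (snd (x s))) has_real_derivative b3 * fst (x t) * fst (snd (x t))) (at t within S)"
proof -
  have d: "(x has_vector_derivative sys_field b1 b2 b3 (x t)) (at t within S)"
    using assms unfolding solves_on_def by blast
  obtain a p q where "x t = (a, p, q)" by (cases "x t") auto
  with has_vector_derivative_fst[OF d] has_vector_derivative_fst[OF has_vector_derivative_snd[OF d]]
    has_vector_derivative_snd[OF has_vector_derivative_snd[OF d]]
  show "((\<lambda>s. fst (x s)) has_real_derivative b1 * fst (snd (x t))) (at t within S)"
    and "((\<lambda>s. fst (snd (x s))) has_real_derivative b2 * fst (x t) * snd (snd (x t))) (at t within S)"
    and "((\<lambda>s. snd (snd (x s))) has_real_derivative b3 * fst (x t) * fst (snd (x t))) (at t within S)"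
    by (simp_all add: sys_field_def has_real_derivative_iff_has_vector_derivative)
qed

lemma sys_field_first_integrals:
  assumes sol: "solves_on (sys_field b1 b2 b3) x {0..<T}" and t: "t \<in> {0..<T}"
  shows "b3 * (fst (snd (x t)))\<^sup>2 - b2 * (snd (snd (x t)))\<^sup>2
       = b3 * (fst (snd (x 0)))\<^sup>2 - b2 * (snd (snd (x 0)))\<^sup>2"
    and "b3 * (fst (x t))\<^sup>2 - 2 * b1 * snd (snd (x t)) = b3 * (fst (x 0))\<^sup>2 - 2 * b1 * snd (snd (x 0))"
proof -
  have "0 \<in> {0..<T}" using t by auto
  have "\<exists>c. \<forall>s\<in>{0..<T}. b3 * (fst (snd (x s)))\<^sup>2 - b2 * (snd (snd (x s)))\<^sup>2 = c"
  proof (rule has_field_derivative_zero_constant)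
    fix s assume "s \<in> {0..<T}"
    from sys_field_component_derivatives(2,3)[OF sol this]
    show "((\<lambda>s. b3 * (fst (snd (x s)))\<^sup>2 - b2 * (snd (snd (x s)))\<^sup>2) has_real_derivative 0)
            (at s within {0..<T})"
      by (auto intro!: derivative_eq_intros simp: algebra_simps)
  qed simp
  with t \<open>0 \<in> {0..<T}\<close> show "b3 * (fst (snd (x t)))\<^sup>2 - b2 * (snd (snd (x t)))\<^sup>2
       = b3 * (fst (snd (x 0)))\<^sup>2 - b2 * (snd (snd (x 0)))\<^sup>2"
    by metis
  have "\<exists>c. \<forall>s\<in>{0..<T}. b3 * (fst (x s))\<^sup>2 - 2 * b1 * snd (snd (x s)) = c"
  proof (rule has_field_derivative_zero_constant)
    fix s assume "s \<in> {0..<T}"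
    from sys_field_component_derivatives(1,3)[OF sol this]
    show "((\<lambda>s. b3 * (fst (x s))\<^sup>2 - 2 * b1 * snd (snd (x s))) has_real_derivative 0)
            (at s within {0..<T})"
      by (auto intro!: derivative_eq_intros simp: algebra_simps)
  qed simp
  with t \<open>0 \<in> {0..<T}\<close>
  show "b3 * (fst (x t))\<^sup>2 - 2 * b1 * snd (snd (x t)) = b3 * (fst (x 0))\<^sup>2 - 2 * b1 * snd (snd (x 0))"
    by metis
qed

definition energy_casimir :: "real \<Rightarrow> real \<Rightarrow> real \<Rightarrow> real \<Rightarrow> real \<times> real \<times> real \<Rightarrow> real" where
  "energy_casimir b1 b2 b3 m =
     (\<lambda>(x1, x2, x3). b3 * (b3 * x2\<^sup>2 - b2 * x3\<^sup>2) + (b3 * x1\<^sup>2 - 2 * b1 * x3 - b3 * m\<^sup>2)\<^sup>2)"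

lemma energy_casimir_conserved:
  assumes "solves_on (sys_field b1 b2 b3) x {0..<T}" "t \<in> {0..<T}"
  shows "energy_casimir b1 b2 b3 m (x t) = energy_casimir b1 b2 b3 m (x 0)"
  using sys_field_first_integrals[OF assms]
  by (simp add: energy_casimir_def case_prod_beta)

lemma continuous_on_energy_casimir: "continuous_on UNIV (energy_casimir b1 b2 b3 m)"
  unfolding energy_casimir_def case_prod_beta by (intro continuous_intros)

lemma energy_casimir_strict_local_min:
  assumes "b3 \<noteq> 0" "b2 * b3 < 0"
    and "y \<in> cball (m, 0, 0) \<bar>m\<bar>" "y \<noteq> (m, 0, 0)"
  shows "energy_casimir b1 b2 b3 m (m, 0, 0) < energy_casimir b1 b2 b3 m y"
proof -
  obtain a p q where y: "y = (a, p, q)" by (cases y) auto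
  have "\<bar>a - m\<bar> \<le> \<bar>m\<bar>"
    using assms(3) dist_fst_le[of "(m, 0, 0)" y] by (simp add: y dist_real_def)
  have V_y: "energy_casimir b1 b2 b3 m y
      = b3\<^sup>2 * p\<^sup>2 + (- (b2 * b3)) * q\<^sup>2 + (b3 * a\<^sup>2 - 2 * b1 * q - b3 * m\<^sup>2)\<^sup>2"
    by (simp add: energy_casimir_def y power2_eq_square algebra_simps)
  have nonneg: "0 \<le> b3\<^sup>2 * p\<^sup>2" "0 \<le> (- (b2 * b3)) * q\<^sup>2"
    using assms(2) by (simp_all add: mult_nonpos_nonneg)
  have V_e: "energy_casimir b1 b2 b3 m (m, 0, 0) = 0"
    by (simp add: energy_casimir_def)
  show ?thesis
  proof (rule ccontr)
    assume "\<not> ?thesis"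
    with V_y V_e nonneg have "b3\<^sup>2 * p\<^sup>2 = 0" "(- (b2 * b3)) * q\<^sup>2 = 0"
      and "(b3 * a\<^sup>2 - 2 * b1 * q - b3 * m\<^sup>2)\<^sup>2 = 0"
      by (smt (verit) zero_le_power2)+
    then have "p = 0" "q = 0" "b3 * (a\<^sup>2 - m\<^sup>2) = 0"
      using assms(1,2) by (auto simp: right_diff_distrib)
    then have "a = m"
      using assms(1) \<open>\<bar>a - m\<bar> \<le> \<bar>m\<bar>\<close> by (auto simp: power2_eq_iff)
    with \<open>p = 0\<close> \<open>q = 0\<close> show False
      using assms(4) y by simp
  qed
qed

theorem proposition4p2:
  fixes b1 b2 b3 m :: real
  assumes "b1 * b2 * b3 \<noteq> 0" and "b2 * b3 < 0" and "m \<noteq> 0"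
  shows "nonlinear_stable (sys_field b1 b2 b3) (m, 0, 0)"
proof (rule nonlinear_stable_if_conserved_strict_local_min)
  show "\<bar>m\<bar> > 0" using assms(3) by simp
  show "continuous_on UNIV (energy_casimir b1 b2 b3 m)"
    by (rule continuous_on_energy_casimir)
  show "\<And>y. y \<in> cball (m, 0, 0) \<bar>m\<bar> \<Longrightarrow> y \<noteq> (m, 0, 0) \<Longrightarrow>
          energy_casimir b1 b2 b3 m (m, 0, 0) < energy_casimir b1 b2 b3 m y"
    using assms(1,2) by (intro energy_casimir_strict_local_min) auto
qed (rule energy_casimir_conserved)

end
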